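(* Let $d\ge1$ and $r\ge4$ be integers, $\delta_0\in(0,1)$, and $p(x)\in\mathbb{Z}[i][x]$ a polynomial of degree $d$. Let $N, N_1$ be positive integers with $N\ge N_1$. Let $A\subseteq[N]$ have density $\delta\ge\delta_0$ and let $D$ be a nonempty subset of $[2N^{1/(2d)}]$. Assume the balanced function $f$ of $A$ satisfies \[ \Big| \mathbb{E}_{n\in[N]}\mathbb{E}_{x\in D}\mathbb{E}_{\mathbf{h}\in [N^{1/(8d^r)}]^{d-1}} f(n) f\big(n + p(\sigma_{d-1}(x,\mathbf{h}))\big)\Big| \ge \frac{\delta^2}{2}. \] Define \[ N_0 = \max\left\{N_1,\ \left(\frac{2^{3\cdot 2^{d-1}-1}}{\delta_0^{2^{d-1}+1}}\right)^{4d^r},\ \left(\frac{2^{3\cdot 2^{d-1}}(2d+2)^{2d+2}2^{2d(d+1)}M_p^2}{\delta_0^{2^{d-1}+1}}\right)^4\right\}. \] If $N\ge N_0$, then there exist Gaussian integers $\alpha,\beta$ with $\alpha\neq0$ and $\max\{|\alpha|,|\beta|\}\le 2^{d(2d+1)}M_p N^{1/(8d^{r-2})}$ such that \[ \Big|\mathbb{E}_{n\in[N]}\mathbb{E}_{x\in D} f(n) f(n+\alpha x+\beta)\Big| \ge \frac{\delta^{2^{d-1}+1}}{2^{3\cdot 2^{d-1}-2}}. \]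
   Context: For a real number $X\ge 1$, $[X] := \{a+bi \in \mathbb{Z}[i] : a,b \in \mathbb{Z},\ 1 \le a,b \le X\}$; $[X]^j$ is its $j$-fold Cartesian product (for $j=0$ a single empty tuple). For a finite nonempty set $S$, $\mathbb{E}_{x\in S} g(x) := |S|^{-1}\sum_{x\in S} g(x)$. A subset $A\subseteq[N]$ has density $\delta=|A|/N^2$, and its balanced function is $f(n) = \mathbf{1}_A(n) - \delta\mathbf{1}_{[N]}(n)$ for $n\in\mathbb{Z}[i]$. For $x \in \mathbb{Z}[i]$ and $\mathbf{h} = (h_1,\dots,h_j)$, $\sigma_j(x,\mathbf{h}) := x + h_1 + \dots + h_j$. For $p(x) = a_d x^d + \dots + a_0 \in \mathbb{C}[x]$ with $a_d\neq 0$, $M_p := 2\max\{|a_0|,\dots,|a_d|\}$. *)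

theory Defs
  imports "HOL-Analysis.Analysis" "HOL-Computational_Algebra.Polynomial"
begin

definition gauss_ints :: "complex set" where
  "gauss_ints = {z. Re z \<in> \<int> \<and> Im z \<in> \<int>}"

definition gbox :: "real \<Rightarrow> complex set" where
  "gbox X = {Complex (of_int a) (of_int b) | a b :: int.
               1 \<le> a \<and> real_of_int a \<le> X \<and> 1 \<le> b \<and> real_of_int b \<le> X}"

definition gbox_pow :: "real \<Rightarrow> nat \<Rightarrow> (nat \<Rightarrow> complex) set" where
  "gbox_pow X j = ({..<j} \<rightarrow>\<^sub>E gbox X)"

definition sigma :: "nat \<Rightarrow> complex \<Rightarrow> (nat \<Rightarrow> complex) \<Rightarrow> complex" where
  "sigma j x h = x + (\<Sum>i<j. h i)"

definition avg :: "'a set \<Rightarrow> ('a \<Rightarrow> real) \<Rightarrow> real" where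
  "avg S g = (\<Sum>x\<in>S. g x) / real (card S)"

definition density :: "complex set \<Rightarrow> nat \<Rightarrow> real" where
  "density A N = real (card A) / (real N)^2"

definition balanced :: "complex set \<Rightarrow> nat \<Rightarrow> complex \<Rightarrow> real" where
  "balanced A N n = indicator A n - density A N * indicator (gbox (real N)) n"

definition Mp :: "complex poly \<Rightarrow> real" where
  "Mp p = 2 * Max ((\<lambda>i. cmod (coeff p i)) ` {..degree p})"

end

theory Submission
  imports Defs
begin

text \<open>
  PET induction on the degree by repeated van der Corput differencing. If the correlation
  of F with the shifts Q(x + h_1 + ... + h_k) is at least \<epsilon>, Cauchy-Schwarz in n and
  expansion of the square of the average over h_k \<in> [X] show that the correlations of F
  with the differenced polynomials Q(z + u) - Q(z + t) have average at least \<epsilon>^2/\<delta> over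
  pairs (t, u) \<in> [X]^2. The diagonal t = u contributes at most 1/|[X]|, which is small
  because N is large, so some pair t \<noteq> u gives correlation at least \<epsilon>^2/(4\<delta>). The
  differenced polynomial has degree one less, leading coefficient e a_e (u - t) \<noteq> 0, and
  Gaussian integer coefficients growing by a factor O(8^e X^e) per step. After d - 1 steps
  it is linear.
\<close>

lemma avg_mult_left: "avg S (\<lambda>x. c * g x) = c * avg S g"
  by (simp add: avg_def sum_distrib_left)

lemma avg_swap: "avg A (\<lambda>a. avg B (\<lambda>b. g a b)) = avg B (\<lambda>b. avg A (\<lambda>a. g a b))"
  unfolding avg_def by (simp add: sum_divide_distrib[symmetric] sum.swap[of _ A B])

lemma avg_swap3:
  "avg A (\<lambda>a. avg B (\<lambda>b. avg C (\<lambda>c. g a b c))) = avg C (\<lambda>c. avg A (\<lambda>a. avg B (\<lambda>b. g a b c)))"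
  by (simp add: avg_swap[of B C] avg_swap[of A C])

lemma avg_mono: "(\<And>x. x \<in> S \<Longrightarrow> g x \<le> h x) \<Longrightarrow> avg S g \<le> avg S h"
  unfolding avg_def by (intro divide_right_mono sum_mono) auto

lemma avg_nonneg: "(\<And>x. x \<in> S \<Longrightarrow> 0 \<le> g x) \<Longrightarrow> 0 \<le> avg S g"
  unfolding avg_def by (intro divide_nonneg_nonneg sum_nonneg) auto

lemma avg_const: "finite S \<Longrightarrow> S \<noteq> {} \<Longrightarrow> avg S (\<lambda>_. c) = c"
  unfolding avg_def by simp

lemma avg_singleton: "avg {a} g = g a"
  unfolding avg_def by simp

lemma avg_abs_le: "\<bar>avg S g\<bar> \<le> avg S (\<lambda>x. \<bar>g x\<bar>)"
  unfolding avg_def by (simp add: abs_div_pos[symmetric] divide_right_mono)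

lemma avg_abs_le_1:
  assumes "\<And>x. x \<in> S \<Longrightarrow> \<bar>g x\<bar> \<le> 1"
  shows "\<bar>avg S g\<bar> \<le> 1"
proof -
  have "avg S (\<lambda>x. \<bar>g x\<bar>) \<le> avg S (\<lambda>x. 1)"
    using assms by (rule avg_mono)
  also have "\<dots> \<le> 1"
    unfolding avg_def by (cases "finite S") (auto simp: divide_le_eq_1)
  finally show ?thesis
    using avg_abs_le[of S g] by linarith
qed

lemma avg_Cauchy_Schwarz:
  "(avg S (\<lambda>x. g x * h x))\<^sup>2 \<le> avg S (\<lambda>x. (g x)\<^sup>2) * avg S (\<lambda>x. (h x)\<^sup>2)"
proof -
  have "(avg S (\<lambda>x. g x * h x))\<^sup>2 = (\<Sum>x\<in>S. g x * h x)\<^sup>2 / (real (card S))\<^sup>2"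
    unfolding avg_def by (simp add: power_divide)
  also have "\<dots> \<le> ((\<Sum>x\<in>S. (g x)\<^sup>2) * (\<Sum>x\<in>S. (h x)\<^sup>2)) / (real (card S))\<^sup>2"
    by (intro divide_right_mono Cauchy_Schwarz_ineq_sum) auto
  also have "\<dots> = avg S (\<lambda>x. (g x)\<^sup>2) * avg S (\<lambda>x. (h x)\<^sup>2)"
    unfolding avg_def by (simp add: power2_eq_square)
  finally show ?thesis .
qed

lemma avg_square_le: "(avg S g)\<^sup>2 \<le> avg S (\<lambda>x. (g x)\<^sup>2)"
proof (cases "finite S \<and> S \<noteq> {}")
  case True
  have "(avg S g)\<^sup>2 \<le> avg S (\<lambda>x. 1\<^sup>2) * avg S (\<lambda>x. (g x)\<^sup>2)"
    using avg_Cauchy_Schwarz[of S "\<lambda>_. 1" g] by simp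
  then show ?thesis
    using True by (simp add: avg_const)
next
  case False
  then show ?thesis
    unfolding avg_def by auto
qed

lemma avg_square_eq: "(avg H g)\<^sup>2 = avg H (\<lambda>t. avg H (\<lambda>u. g t * g u))"
  unfolding avg_def power2_eq_square
  by (simp add: sum_product sum_divide_distrib[symmetric] sum_distrib_left field_simps)

lemma sum_avg_swap: "(\<Sum>n\<in>W. avg H (\<lambda>t. g n t)) = avg H (\<lambda>t. \<Sum>n\<in>W. g n t)"
  unfolding avg_def by (simp add: sum_divide_distrib[symmetric] sum.swap[of _ W H])

lemma gauss_ints_diff: "a \<in> gauss_ints \<Longrightarrow> b \<in> gauss_ints \<Longrightarrow> a - b \<in> gauss_ints"
  unfolding gauss_ints_def by auto

lemma gauss_ints_mult: "a \<in> gauss_ints \<Longrightarrow> b \<in> gauss_ints \<Longrightarrow> a * b \<in> gauss_ints"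
  unfolding gauss_ints_def by auto

lemma gauss_ints_of_nat: "of_nat n \<in> gauss_ints"
  unfolding gauss_ints_def by auto

lemma gauss_ints_power: "a \<in> gauss_ints \<Longrightarrow> a ^ n \<in> gauss_ints"
  by (induction n) (auto simp: gauss_ints_def intro: gauss_ints_mult)

lemma gauss_ints_sum: "(\<And>i. i \<in> I \<Longrightarrow> f i \<in> gauss_ints) \<Longrightarrow> sum f I \<in> gauss_ints"
  by (induction I rule: infinite_finite_induct) (auto simp: gauss_ints_def)

lemma gbox_eq_image:
  "gbox X = (\<lambda>(a, b). Complex (of_int a) (of_int b)) ` ({1..\<lfloor>X\<rfloor>} \<times> {1..\<lfloor>X\<rfloor>})"
  unfolding gbox_def by (auto simp: le_floor_iff image_iff)

lemma finite_gbox [simp]: "finite (gbox X)"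
  unfolding gbox_eq_image by simp

lemma card_gbox: "card (gbox X) = (nat \<lfloor>X\<rfloor>)\<^sup>2"
proof -
  have "inj_on (\<lambda>(a, b). Complex (of_int a) (of_int b)) ({1..\<lfloor>X\<rfloor>} \<times> {1..\<lfloor>X\<rfloor>})"
    by (auto simp: inj_on_def)
  then show ?thesis
    unfolding gbox_eq_image by (simp add: card_image card_cartesian_product power2_eq_square)
qed

lemma inverse_card_gbox_le:
  assumes "X \<ge> 2"
  shows "1 / real (card (gbox X)) \<le> 4 / X\<^sup>2"
proof -
  have "X / 2 \<le> real (nat \<lfloor>X\<rfloor>)"
    using assms by linarith
  then have "(X / 2)\<^sup>2 \<le> real (card (gbox X))"
    unfolding card_gbox using assms by (simp add: power_mono)
  moreover have "0 < (X / 2)\<^sup>2"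
    using assms by simp
  ultimately show ?thesis
    by (simp add: divide_le_eq field_simps power2_eq_square)
qed

lemma gbox_subset_gauss_ints: "gbox X \<subseteq> gauss_ints"
  unfolding gbox_def gauss_ints_def by auto

lemma norm_le_gbox: "z \<in> gbox X \<Longrightarrow> cmod z \<le> 2 * X"
  unfolding gbox_def using cmod_le[of z] by auto

lemma gbox_pow_0: "gbox_pow X 0 = {\<lambda>_. undefined}"
  unfolding gbox_pow_def by simp

lemma avg_gbox_pow_Suc:
  "avg (gbox_pow X (Suc k)) g = avg (gbox_pow X k) (\<lambda>h. avg (gbox X) (\<lambda>t. g (h(k := t))))"
proof -
  have eq: "gbox_pow X (Suc k) = (\<lambda>(y, g). g(k := y)) ` (gbox X \<times> gbox_pow X k)"
    unfolding gbox_pow_def lessThan_Suc by (rule PiE_insert_eq)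
  have inj: "inj_on (\<lambda>(y, g). g(k := y)) (gbox X \<times> gbox_pow X k)"
    unfolding gbox_pow_def using inj_combinator[of k "{..<k}" "\<lambda>_. gbox X"] by simp
  have "(\<Sum>h\<in>gbox_pow X (Suc k). g h) = (\<Sum>(y, h)\<in>gbox X \<times> gbox_pow X k. g (h(k := y)))"
    unfolding eq by (subst sum.reindex[OF inj]) (simp add: case_prod_unfold)
  also have "\<dots> = (\<Sum>h\<in>gbox_pow X k. \<Sum>y\<in>gbox X. g (h(k := y)))"
    by (subst sum.cartesian_product[symmetric]) (rule sum.swap)
  finally show ?thesis
    unfolding avg_def gbox_pow_def card_PiE[OF finite_lessThan]
    by (simp add: sum_divide_distrib[symmetric] field_simps gbox_pow_def)
qed

lemma sigma_Suc_upd: "sigma (Suc k) x (h(k := t)) = sigma k x h + t"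
  unfolding sigma_def by simp

section \<open>Van der Corput differencing\<close>

lemma sum_translate_supported:
  fixes F :: "complex \<Rightarrow> real"
  assumes W: "finite W" and sub: "(\<lambda>m. m - s) ` G \<subseteq> W" and supp: "\<And>z. z \<notin> G \<Longrightarrow> F z = 0"
  shows "(\<Sum>n\<in>W. F (n + s) * g n) = (\<Sum>m\<in>G. F m * g (m - s))"
proof -
  have "(\<Sum>n\<in>W. F (n + s) * g n) = (\<Sum>n\<in>(\<lambda>m. m - s) ` G. F (n + s) * g n)"
  proof (rule sum.mono_neutral_right[OF W sub], safe)
    fix n assume "n \<in> W" "n \<notin> (\<lambda>m. m - s) ` G"
    then have "n + s \<notin> G"
      by (metis add_diff_cancel image_eqI)
    then show "F (n + s) * g n = 0"
      using supp by simp
  qed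
  also have "\<dots> = (\<Sum>m\<in>G. F m * g (m - s))"
    by (subst sum.reindex) (auto simp: inj_on_def)
  finally show ?thesis .
qed

text \<open>
  The van der Corput inequality: the sum over n is first extended from G to the finite
  set W of all n + b t that can meet the support G of F, then translated back by each b t.
\<close>

lemma avg_square_avg_translates_le:
  fixes F :: "complex \<Rightarrow> real"
  assumes G: "finite G" and H: "finite H" and supp: "\<And>z. z \<notin> G \<Longrightarrow> F z = 0"
  shows "avg G (\<lambda>n. (avg H (\<lambda>t. F (n + b t)))\<^sup>2)
           \<le> avg H (\<lambda>t. avg H (\<lambda>u. avg G (\<lambda>m. F m * F (m + b u - b t))))"
proof -
  define W where "W = G \<union> (\<Union>t\<in>H. (\<lambda>m. m - b t) ` G)"
  have W: "finite W"
    unfolding W_def using G H by auto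
  have translate: "(\<Sum>n\<in>W. F (n + b t) * F (n + b u)) = (\<Sum>m\<in>G. F m * F (m + b u - b t))"
    if "t \<in> H" for t u
  proof -
    have "(\<lambda>m. m - b t) ` G \<subseteq> W"
      using that by (auto simp: W_def)
    from sum_translate_supported[where F = F and g = "\<lambda>n. F (n + b u)", OF W this supp]
    show ?thesis
      by (simp add: algebra_simps)
  qed
  have "(\<Sum>n\<in>G. (avg H (\<lambda>t. F (n + b t)))\<^sup>2) \<le> (\<Sum>n\<in>W. (avg H (\<lambda>t. F (n + b t)))\<^sup>2)"
    by (rule sum_mono2[OF W]) (auto simp: W_def)
  also have "\<dots> = avg H (\<lambda>t. avg H (\<lambda>u. \<Sum>n\<in>W. F (n + b t) * F (n + b u)))"
    by (simp add: avg_square_eq sum_avg_swap)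
  also have "\<dots> = avg H (\<lambda>t. avg H (\<lambda>u. \<Sum>m\<in>G. F m * F (m + b u - b t)))"
    unfolding avg_def by (simp add: translate cong: sum.cong)
  finally have "avg G (\<lambda>n. (avg H (\<lambda>t. F (n + b t)))\<^sup>2)
      \<le> avg H (\<lambda>t. avg H (\<lambda>u. \<Sum>m\<in>G. F m * F (m + b u - b t))) / real (card G)"
    unfolding avg_def[of G] by (rule divide_right_mono) simp
  also have "\<dots> = avg H (\<lambda>t. avg H (\<lambda>u. avg G (\<lambda>m. F m * F (m + b u - b t))))"
    unfolding avg_def by (simp add: sum_divide_distrib[symmetric] algebra_simps)
  finally show ?thesis .
qed

definition corr :: "(complex \<Rightarrow> real) \<Rightarrow> complex set \<Rightarrow> complex set \<Rightarrow> real \<Rightarrow> nat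
    \<Rightarrow> (complex \<Rightarrow> complex) \<Rightarrow> real" where
  "corr F G D X k Q =
     avg G (\<lambda>n. avg D (\<lambda>x. avg (gbox_pow X k) (\<lambda>h. F n * F (n + Q (sigma k x h)))))"

lemma corr_0: "corr F G D X 0 Q = avg G (\<lambda>n. avg D (\<lambda>x. F n * F (n + Q x)))"
  unfolding corr_def gbox_pow_0 avg_singleton sigma_def by simp

lemma abs_corr_le_1: "(\<And>z. \<bar>F z\<bar> \<le> 1) \<Longrightarrow> \<bar>corr F G D X k Q\<bar> \<le> 1"
  unfolding corr_def by (intro avg_abs_le_1) (auto simp: abs_mult intro: mult_le_one)

lemma corr_Suc_square_le:
  fixes F :: "complex \<Rightarrow> real"
  assumes G: "finite G" and supp: "\<And>z. z \<notin> G \<Longrightarrow> F z = 0"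
  shows "(corr F G D X (Suc k) Q)\<^sup>2 \<le> avg G (\<lambda>n. (F n)\<^sup>2) *
           avg (gbox X) (\<lambda>t. avg (gbox X) (\<lambda>u. corr F G D X k (\<lambda>z. Q (z + u) - Q (z + t))))"
proof -
  define H where "H = gbox X"
  define P where "P = gbox_pow X k"
  define K where "K n = avg D (\<lambda>x. avg P (\<lambda>h. avg H (\<lambda>t. F (n + Q (sigma k x h + t)))))" for n
  have "corr F G D X (Suc k) Q = avg G (\<lambda>n. F n * K n)"
    unfolding corr_def K_def avg_gbox_pow_Suc sigma_Suc_upd H_def P_def by (simp add: avg_mult_left)
  then have "(corr F G D X (Suc k) Q)\<^sup>2 \<le> avg G (\<lambda>n. (F n)\<^sup>2) * avg G (\<lambda>n. (K n)\<^sup>2)"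
    using avg_Cauchy_Schwarz by simp
  moreover have "avg G (\<lambda>n. (K n)\<^sup>2)
      \<le> avg G (\<lambda>n. avg D (\<lambda>x. avg P (\<lambda>h. (avg H (\<lambda>t. F (n + Q (sigma k x h + t))))\<^sup>2)))"
  proof (rule avg_mono)
    fix n
    have "(K n)\<^sup>2 \<le> avg D (\<lambda>x. (avg P (\<lambda>h. avg H (\<lambda>t. F (n + Q (sigma k x h + t)))))\<^sup>2)"
      unfolding K_def by (rule avg_square_le)
    also have "\<dots> \<le> avg D (\<lambda>x. avg P (\<lambda>h. (avg H (\<lambda>t. F (n + Q (sigma k x h + t))))\<^sup>2))"
      by (intro avg_mono avg_square_le)
    finally show "(K n)\<^sup>2 \<le> avg D (\<lambda>x. avg P (\<lambda>h. (avg H (\<lambda>t. F (n + Q (sigma k x h + t))))\<^sup>2))" .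
  qed
  also have "\<dots> = avg D (\<lambda>x. avg P (\<lambda>h. avg G (\<lambda>n. (avg H (\<lambda>t. F (n + Q (sigma k x h + t))))\<^sup>2)))"
    by (rule avg_swap3[symmetric])
  also have "\<dots> \<le> avg D (\<lambda>x. avg P (\<lambda>h. avg H (\<lambda>t. avg H (\<lambda>u. avg G (\<lambda>m.
                    F m * F (m + Q (sigma k x h + u) - Q (sigma k x h + t)))))))"
    unfolding H_def by (intro avg_mono avg_square_avg_translates_le[OF G finite_gbox supp])
  also have "\<dots> = avg H (\<lambda>t. avg D (\<lambda>x. avg P (\<lambda>h. avg H (\<lambda>u. avg G (\<lambda>m.
                    F m * F (m + Q (sigma k x h + u) - Q (sigma k x h + t)))))))"
    by (rule avg_swap3)
  also have "\<dots> = avg H (\<lambda>t. avg H (\<lambda>u. avg D (\<lambda>x. avg P (\<lambda>h. avg G (\<lambda>m.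
                    F m * F (m + Q (sigma k x h + u) - Q (sigma k x h + t)))))))"
    by (simp only: avg_swap3[of D P H])
  also have "\<dots> = avg H (\<lambda>t. avg H (\<lambda>u. avg G (\<lambda>m. avg D (\<lambda>x. avg P (\<lambda>h.
                    F m * F (m + Q (sigma k x h + u) - Q (sigma k x h + t)))))))"
    by (simp only: avg_swap3[of D P G])
  also have "\<dots> = avg H (\<lambda>t. avg H (\<lambda>u. corr F G D X k (\<lambda>z. Q (z + u) - Q (z + t))))"
    unfolding corr_def P_def by (simp add: add_diff_eq)
  ultimately show ?thesis
    unfolding H_def by (smt (verit) avg_nonneg mult_left_mono zero_le_power2)
qed

lemma exists_offdiag_abs_ge:
  fixes \<Phi> :: "'a \<Rightarrow> 'a \<Rightarrow> real"
  assumes H: "finite H" and bounded: "\<And>t u. \<bar>\<Phi> t u\<bar> \<le> 1"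
    and large: "4 * c \<le> avg H (\<lambda>t. avg H (\<lambda>u. \<Phi> t u))" and c: "c > 0"
    and card: "1 / real (card H) \<le> 3 * c"
  shows "\<exists>t\<in>H. \<exists>u\<in>H. t \<noteq> u \<and> c \<le> \<bar>\<Phi> t u\<bar>"
proof (rule ccontr)
  assume "\<not> ?thesis"
  then have small: "\<And>t u. t \<in> H \<Longrightarrow> u \<in> H \<Longrightarrow> t \<noteq> u \<Longrightarrow> \<bar>\<Phi> t u\<bar> \<le> c"
    by force
  define L where "L = real (card H)"
  have "H \<noteq> {}"
    using large c unfolding avg_def by auto
  then have card_H: "card H \<ge> 1"
    using H by (simp add: Suc_leI card_gt_0_iff)
  then have L: "L \<ge> 1"
    unfolding L_def by simp
  have row: "(\<Sum>u\<in>H. \<Phi> t u) \<le> 1 + (L - 1) * c" if t: "t \<in> H" for t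
  proof -
    have "(\<Sum>u\<in>H. \<Phi> t u) = \<Phi> t t + (\<Sum>u\<in>H - {t}. \<Phi> t u)"
      using H t by (simp add: sum.remove)
    also have "\<dots> \<le> 1 + (\<Sum>u\<in>H - {t}. c)"
      using bounded[of t t] small t by (intro add_mono sum_mono) force+
    also have "\<dots> = 1 + (L - 1) * c"
      using H t card_H unfolding L_def by (simp add: card_Diff_singleton)
    finally show ?thesis .
  qed
  have "avg H (\<lambda>t. avg H (\<lambda>u. \<Phi> t u)) = (\<Sum>t\<in>H. \<Sum>u\<in>H. \<Phi> t u) / L\<^sup>2"
    unfolding avg_def L_def by (simp add: sum_divide_distrib[symmetric] power2_eq_square)
  also have "\<dots> \<le> L * (1 + (L - 1) * c) / L\<^sup>2"
    using sum_mono[of H, OF row] unfolding L_def by (simp add: divide_right_mono)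
  also have "\<dots> = 1 / L + c - c / L"
    using L by (simp add: field_simps power2_eq_square)
  also have "\<dots> < 4 * c"
    using card c L unfolding L_def[symmetric] by (smt (verit) divide_pos_pos)
  finally show False
    using large by simp
qed

lemma corr_differencing:
  fixes F :: "complex \<Rightarrow> real"
  assumes G: "finite G" and supp: "\<And>z. z \<notin> G \<Longrightarrow> F z = 0"
    and F_bounded: "\<And>z. \<bar>F z\<bar> \<le> 1" and mean_square: "avg G (\<lambda>n. (F n)\<^sup>2) \<le> \<delta>"
    and \<delta>: "\<delta> > 0" and \<epsilon>: "\<epsilon> > 0" and large: "\<epsilon> \<le> \<bar>corr F G D X (Suc k) Q\<bar>"
    and card: "1 / real (card (gbox X)) \<le> 3 * (\<epsilon>\<^sup>2 / (4 * \<delta>))"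
  shows "\<exists>t\<in>gbox X. \<exists>u\<in>gbox X. t \<noteq> u \<and>
           \<epsilon>\<^sup>2 / (4 * \<delta>) \<le> \<bar>corr F G D X k (\<lambda>z. Q (z + u) - Q (z + t))\<bar>"
proof (rule exists_offdiag_abs_ge[OF finite_gbox abs_corr_le_1[OF F_bounded]])
  define R where "R = avg (gbox X) (\<lambda>t. avg (gbox X) (\<lambda>u. corr F G D X k (\<lambda>z. Q (z + u) - Q (z + t))))"
  have "\<epsilon>\<^sup>2 \<le> (corr F G D X (Suc k) Q)\<^sup>2"
    using power_mono[OF large, of 2] \<epsilon> by simp
  also have "\<dots> \<le> avg G (\<lambda>n. (F n)\<^sup>2) * R"
    unfolding R_def by (rule corr_Suc_square_le[OF G supp])
  finally have "\<epsilon>\<^sup>2 \<le> \<delta> * R"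
    using mean_square avg_nonneg[of G "\<lambda>n. (F n)\<^sup>2"] \<epsilon>
    by (smt (verit) mult_right_mono mult_nonneg_nonpos zero_le_power2 zero_less_power)
  then show "4 * (\<epsilon>\<^sup>2 / (4 * \<delta>)) \<le> R"
    using \<delta> by (simp add: field_simps)
  show "\<epsilon>\<^sup>2 / (4 * \<delta>) > 0"
    using \<epsilon> \<delta> by simp
qed (fact card)

text \<open>
  Polynomials are handled as coefficient functions c with a degree bound e rather than as
  values of type complex poly, so that the coefficients of the differenced polynomial
  Q(z + u) - Q(z + t) are explicit and can be bounded.
\<close>

definition poly_coeffs :: "(nat \<Rightarrow> complex) \<Rightarrow> nat \<Rightarrow> complex \<Rightarrow> complex" where
  "poly_coeffs c e z = (\<Sum>i\<le>e. c i * z ^ i)"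

definition shift_coeffs :: "(nat \<Rightarrow> complex) \<Rightarrow> nat \<Rightarrow> complex \<Rightarrow> nat \<Rightarrow> complex" where
  "shift_coeffs c e u l = (\<Sum>i\<in>{l..e}. c i * of_nat (i choose l) * u ^ (i - l))"

definition diff_coeffs :: "(nat \<Rightarrow> complex) \<Rightarrow> nat \<Rightarrow> complex \<Rightarrow> complex \<Rightarrow> nat \<Rightarrow> complex" where
  "diff_coeffs c e t u l = shift_coeffs c e u l - shift_coeffs c e t l"

lemma poly_coeffs_shift: "poly_coeffs c e (z + u) = poly_coeffs (shift_coeffs c e u) e z"
proof -
  let ?T = "\<lambda>i l. c i * of_nat (i choose l) * u ^ (i - l) * z ^ l"
  have "poly_coeffs c e (z + u) = (\<Sum>i\<le>e. \<Sum>l\<le>i. ?T i l)"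
    unfolding poly_coeffs_def by (simp add: binomial_ring[of z u] sum_distrib_left mult_ac)
  also have "\<dots> = (\<Sum>i\<le>e. \<Sum>l\<in>{l. l \<in> {..e} \<and> l \<le> i}. ?T i l)"
    by (intro sum.cong refl) auto
  also have "\<dots> = (\<Sum>l\<le>e. \<Sum>i\<in>{i. i \<in> {..e} \<and> l \<le> i}. ?T i l)"
    by (rule sum.swap_restrict) auto
  also have "\<dots> = (\<Sum>l\<le>e. (\<Sum>i\<in>{l..e}. c i * of_nat (i choose l) * u ^ (i - l)) * z ^ l)"
    by (intro sum.cong) (auto simp: sum_distrib_right intro: sum.cong)
  finally show ?thesis
    unfolding poly_coeffs_def shift_coeffs_def .
qed

lemma poly_coeffs_diff_shifts:
  "poly_coeffs c (Suc e) (z + u) - poly_coeffs c (Suc e) (z + t)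
     = poly_coeffs (diff_coeffs c (Suc e) t u) e z"
proof -
  have "poly_coeffs c (Suc e) (z + u) - poly_coeffs c (Suc e) (z + t)
      = poly_coeffs (diff_coeffs c (Suc e) t u) (Suc e) z"
    unfolding poly_coeffs_shift
    by (simp add: poly_coeffs_def diff_coeffs_def sum_subtractf left_diff_distrib)
  also have "\<dots> = poly_coeffs (diff_coeffs c (Suc e) t u) e z"
    by (simp add: poly_coeffs_def diff_coeffs_def shift_coeffs_def)
  finally show ?thesis .
qed

lemma diff_coeffs_lead: "diff_coeffs c (Suc e) t u e = c (Suc e) * of_nat (Suc e) * (u - t)"
proof -
  have "{e..Suc e} = {e, Suc e}"
    by auto
  then show ?thesis
    unfolding diff_coeffs_def shift_coeffs_def by (simp add: algebra_simps)
qed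

lemma diff_coeffs_gauss_ints:
  assumes "\<And>i. i \<le> e \<Longrightarrow> c i \<in> gauss_ints" "t \<in> gauss_ints" "u \<in> gauss_ints"
  shows "diff_coeffs c e t u l \<in> gauss_ints"
  unfolding diff_coeffs_def shift_coeffs_def using assms
  by (intro gauss_ints_diff gauss_ints_sum gauss_ints_mult gauss_ints_of_nat gauss_ints_power) auto

lemma norm_shift_coeffs_le:
  assumes c: "\<And>i. i \<le> e \<Longrightarrow> cmod (c i) \<le> B" and u: "cmod u \<le> 2 * X" and X: "X \<ge> 1"
  shows "cmod (shift_coeffs c e u l) \<le> B * 8 ^ e * X ^ e"
proof -
  have B: "B \<ge> 0"
    using c[of 0] by (meson norm_ge_zero order_trans le0)
  have term_le: "cmod (c i * of_nat (i choose l) * u ^ (i - l)) \<le> B * 2 ^ e * (2 * X) ^ e"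
    if i: "i \<in> {l..e}" for i
  proof -
    have "i choose l \<le> 2 ^ i"
      by (rule binomial_le_pow2)
    also have "(2::nat) ^ i \<le> 2 ^ e"
      using i by (intro power_increasing) auto
    finally have choose_le: "real (i choose l) \<le> 2 ^ e"
      by (metis of_nat_le_iff of_nat_numeral of_nat_power)
    have "cmod u ^ (i - l) \<le> (2 * X) ^ (i - l)"
      using u by (intro power_mono) auto
    also have "\<dots> \<le> (2 * X) ^ e"
      using X i by (intro power_increasing) auto
    finally show ?thesis
      using choose_le c i B by (simp add: norm_mult norm_power mult_mono)
  qed
  have "cmod (shift_coeffs c e u l) \<le> (\<Sum>i\<in>{l..e}. B * 2 ^ e * (2 * X) ^ e)"
    unfolding shift_coeffs_def using term_le by (intro order.trans[OF norm_sum sum_mono]) auto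
  also have "\<dots> = real (card {l..e}) * (B * 2 ^ e * (2 * X) ^ e)"
    by simp
  also have "\<dots> \<le> 2 ^ e * (B * 2 ^ e * (2 * X) ^ e)"
  proof (rule mult_right_mono)
    have "card {l..e} \<le> Suc e"
      by simp
    also have "\<dots> \<le> 2 ^ e"
      using less_exp[of e] by (rule Suc_leI)
    finally show "real (card {l..e}) \<le> 2 ^ e"
      by (metis of_nat_le_iff of_nat_numeral of_nat_power)
  qed (use B X in simp)
  also have "\<dots> = B * 8 ^ e * X ^ e"
  proof -
    have "(8::real) ^ e = 2 ^ e * 2 ^ e * 2 ^ e"
      by (simp flip: power_mult_distrib)
    then show ?thesis
      by (simp add: power_mult_distrib mult_ac)
  qed
  finally show ?thesis .
qed

lemma norm_diff_coeffs_le: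
  assumes c: "\<And>i. i \<le> e \<Longrightarrow> cmod (c i) \<le> B"
    and "cmod t \<le> 2 * X" "cmod u \<le> 2 * X" "X \<ge> 1"
  shows "cmod (diff_coeffs c e t u l) \<le> 2 * 8 ^ e * X ^ e * B"
proof -
  have "cmod (diff_coeffs c e t u l) \<le> cmod (shift_coeffs c e u l) + cmod (shift_coeffs c e t l)"
    unfolding diff_coeffs_def by (rule norm_triangle_ineq4)
  also have "\<dots> \<le> B * 8 ^ e * X ^ e + B * 8 ^ e * X ^ e"
    using assms by (intro add_mono norm_shift_coeffs_le[OF c])
  finally show ?thesis
    by (simp add: algebra_simps)
qed

lemma poly_eq_poly_coeffs: "poly p = poly_coeffs (coeff p) (degree p)"
  by (rule ext) (simp add: poly_coeffs_def poly_altdef)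

lemma norm_coeff_le_Mp:
  assumes "i \<le> degree p"
  shows "cmod (coeff p i) \<le> Mp p"
proof -
  have "cmod (coeff p i) \<le> Mp p / 2"
    using assms unfolding Mp_def by simp
  then show ?thesis
    using norm_ge_zero[of "coeff p i"] by linarith
qed

lemma Mp_nonneg: "0 \<le> Mp p"
  using norm_coeff_le_Mp[of 0 p] by (meson le0 norm_ge_zero order_trans)

section \<open>The PET induction\<close>

definition vdc_bound :: "real \<Rightarrow> nat \<Rightarrow> real" where
  "vdc_bound \<delta> j = \<delta> ^ (2 ^ j + 1) / 2 ^ (3 * 2 ^ j - 2)"

lemma vdc_bound_pos: "\<delta> > 0 \<Longrightarrow> vdc_bound \<delta> j > 0"
  unfolding vdc_bound_def by simp

lemma vdc_bound_Suc:
  assumes "\<delta> > 0"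
  shows "(vdc_bound \<delta> j)\<^sup>2 / (4 * \<delta>) = vdc_bound \<delta> (Suc j)"
proof -
  define a :: nat where "a = 2 ^ j"
  have a: "a \<ge> 1"
    unfolding a_def by simp
  have exp_\<delta>: "2 ^ Suc j + 1 = (2 * a + 2) - 1"
    unfolding a_def by simp
  have "3 * 2 ^ Suc j = 2 * (3 * a)"
    unfolding a_def by simp
  then have exp_2: "3 * 2 ^ Suc j - 2 = 2 * (3 * a - 2) + 2"
    using a by linarith
  have "\<delta> ^ (2 * a + 2 - 1) = \<delta> ^ (2 * a + 2) / \<delta>"
    using assms by (simp add: power_diff)
  moreover have "(4::real) ^ m = 2 ^ m * 2 ^ m" for m
    by (simp flip: power_mult_distrib)
  ultimately show ?thesis
    unfolding vdc_bound_def exp_\<delta> exp_2 a_def[symmetric]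
    by (simp add: power2_eq_square power_add power_mult field_simps)
qed

lemma vdc_bound_mono:
  assumes "0 < \<delta>0" "\<delta>0 \<le> \<delta>" "\<delta> \<le> 1" "j \<le> J"
  shows "vdc_bound \<delta>0 J \<le> vdc_bound \<delta> j"
proof -
  have pow: "(2::nat) ^ j \<le> 2 ^ J"
    using assms by (intro power_increasing) auto
  have "\<delta>0 ^ (2 ^ J + 1) \<le> \<delta> ^ (2 ^ J + 1)"
    using assms by (intro power_mono) auto
  also have "\<dots> \<le> \<delta> ^ (2 ^ j + 1)"
    using assms pow by (intro power_decreasing) auto
  finally have "\<delta>0 ^ (2 ^ J + 1) \<le> \<delta> ^ (2 ^ j + 1)" .
  moreover have "(2::real) ^ (3 * 2 ^ j - 2) \<le> 2 ^ (3 * 2 ^ J - 2)"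
    using pow by (intro power_increasing diff_le_mono) auto
  ultimately show ?thesis
    unfolding vdc_bound_def using assms by (intro frac_le) auto
qed

lemma vdc_bound_le_half:
  assumes "0 \<le> \<delta>" "\<delta> \<le> 1"
  shows "vdc_bound \<delta> j \<le> 1 / 2"
proof -
  have "\<delta> ^ (2 ^ j + 1) \<le> 1"
    using assms by (intro power_le_one) auto
  moreover have "1 \<le> (2::nat) ^ j"
    by simp
  then have "(2::real) ^ 1 \<le> 2 ^ (3 * 2 ^ j - 2)"
    by (intro power_increasing) linarith+
  ultimately show ?thesis
    unfolding vdc_bound_def by (simp add: divide_le_eq)
qed

lemma two_div_vdc_bound:
  assumes "\<delta> > 0"
  shows "2 / vdc_bound \<delta> J = 2 ^ (3 * 2 ^ J - 1) / \<delta> ^ (2 ^ J + 1)"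
proof -
  have "1 \<le> (2::nat) ^ J"
    by simp
  then have "3 * 2 ^ J - 1 = Suc (3 * 2 ^ J - 2)"
    by linarith
  then show ?thesis
    unfolding vdc_bound_def using assms by simp
qed

lemma corr_poly_coeffs_differencing:
  fixes F :: "complex \<Rightarrow> real"
  assumes G: "finite G" and supp: "\<And>z. z \<notin> G \<Longrightarrow> F z = 0"
    and F_bounded: "\<And>z. \<bar>F z\<bar> \<le> 1" and mean_square: "avg G (\<lambda>n. (F n)\<^sup>2) \<le> \<delta>"
    and \<delta>: "\<delta> > 0" and \<epsilon>: "\<epsilon> > 0" and X: "X \<ge> 1"
    and card: "1 / real (card (gbox X)) \<le> 3 * (\<epsilon>\<^sup>2 / (4 * \<delta>))"
    and gauss: "\<forall>i\<le>Suc (Suc k). c i \<in> gauss_ints" and lead: "c (Suc (Suc k)) \<noteq> 0"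
    and coeffs_le: "\<forall>i\<le>Suc (Suc k). cmod (c i) \<le> B"
    and large: "\<epsilon> \<le> \<bar>corr F G D X (Suc k) (poly_coeffs c (Suc (Suc k)))\<bar>"
  obtains c' where "\<forall>i\<le>Suc k. c' i \<in> gauss_ints" "c' (Suc k) \<noteq> 0"
    "\<forall>i\<le>Suc k. cmod (c' i) \<le> 2 * 8 ^ Suc (Suc k) * X ^ Suc (Suc k) * B"
    "\<epsilon>\<^sup>2 / (4 * \<delta>) \<le> \<bar>corr F G D X k (poly_coeffs c' (Suc k))\<bar>"
proof -
  obtain t u where tu: "t \<in> gbox X" "u \<in> gbox X" "t \<noteq> u"
    and diff_large: "\<epsilon>\<^sup>2 / (4 * \<delta>) \<le> \<bar>corr F G D X k (\<lambda>z. poly_coeffs c (Suc (Suc k)) (z + u)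
                                                 - poly_coeffs c (Suc (Suc k)) (z + t))\<bar>"
    using corr_differencing[OF G supp F_bounded mean_square \<delta> \<epsilon> large card] by blast
  show thesis
  proof (rule that[of "diff_coeffs c (Suc (Suc k)) t u"])
    show "\<forall>i\<le>Suc k. diff_coeffs c (Suc (Suc k)) t u i \<in> gauss_ints"
      using gauss tu gbox_subset_gauss_ints by (blast intro: diff_coeffs_gauss_ints)
    show "diff_coeffs c (Suc (Suc k)) t u (Suc k) \<noteq> 0"
      unfolding diff_coeffs_lead using lead tu by (simp del: of_nat_Suc)
    show "\<forall>i\<le>Suc k. cmod (diff_coeffs c (Suc (Suc k)) t u i) \<le> 2 * 8 ^ Suc (Suc k) * X ^ Suc (Suc k) * B"
      using coeffs_le tu X norm_le_gbox by (blast intro: norm_diff_coeffs_le)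
    show "\<epsilon>\<^sup>2 / (4 * \<delta>) \<le> \<bar>corr F G D X k (poly_coeffs (diff_coeffs c (Suc (Suc k)) t u) (Suc k))\<bar>"
      using diff_large by (simp add: poly_coeffs_diff_shifts)
  qed
qed

lemma iterated_differencing:
  fixes F :: "complex \<Rightarrow> real"
  assumes G: "finite G" and supp: "\<And>z. z \<notin> G \<Longrightarrow> F z = 0"
    and F_bounded: "\<And>z. \<bar>F z\<bar> \<le> 1" and mean_square: "avg G (\<lambda>n. (F n)\<^sup>2) \<le> \<delta>"
    and \<delta>: "\<delta> > 0" and X: "X \<ge> 1"
  shows "(\<And>i. i \<le> j + k \<Longrightarrow> 1 / real (card (gbox X)) \<le> 3 * vdc_bound \<delta> i) \<Longrightarrow>
    \<forall>i\<le>Suc k. c i \<in> gauss_ints \<Longrightarrow> c (Suc k) \<noteq> 0 \<Longrightarrow> \<forall>i\<le>Suc k. cmod (c i) \<le> B \<Longrightarrow>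
    vdc_bound \<delta> j \<le> \<bar>corr F G D X k (poly_coeffs c (Suc k))\<bar> \<Longrightarrow>
    \<exists>\<alpha> \<beta>. \<alpha> \<in> gauss_ints \<and> \<beta> \<in> gauss_ints \<and> \<alpha> \<noteq> 0 \<and>
      max (cmod \<alpha>) (cmod \<beta>) \<le> B * (\<Prod>e\<in>{2..Suc k}. 2 * 8 ^ e * X ^ e) \<and>
      vdc_bound \<delta> (j + k) \<le> \<bar>corr F G D X 0 (\<lambda>z. \<alpha> * z + \<beta>)\<bar>"
proof (induction k arbitrary: j c B)
  case 0
  have "poly_coeffs c (Suc 0) = (\<lambda>z. c 1 * z + c 0)"
    unfolding poly_coeffs_def by (auto simp: add.commute)
  with 0 show ?case
    by (intro exI[of _ "c 1"] exI[of _ "c 0"]) auto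
next
  case (Suc k)
  have card: "1 / real (card (gbox X)) \<le> 3 * ((vdc_bound \<delta> j)\<^sup>2 / (4 * \<delta>))"
    unfolding vdc_bound_Suc[OF \<delta>] using Suc.prems(1) by simp
  obtain c' where "\<forall>i\<le>Suc k. c' i \<in> gauss_ints" "c' (Suc k) \<noteq> 0"
    "\<forall>i\<le>Suc k. cmod (c' i) \<le> 2 * 8 ^ Suc (Suc k) * X ^ Suc (Suc k) * B"
    "vdc_bound \<delta> (Suc j) \<le> \<bar>corr F G D X k (poly_coeffs c' (Suc k))\<bar>"
    using corr_poly_coeffs_differencing[OF G supp F_bounded mean_square \<delta> vdc_bound_pos[OF \<delta>] X card]
      Suc.prems(2-5) unfolding vdc_bound_Suc[OF \<delta>] by blast
  with Suc.prems(1) Suc.IH[of "Suc j" c' "2 * 8 ^ Suc (Suc k) * X ^ Suc (Suc k) * B"]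
  show ?case
    by (simp add: mult_ac)
qed

lemma iterated_differencing_poly:
  fixes F :: "complex \<Rightarrow> real" and p :: "complex poly"
  assumes G: "finite G" and supp: "\<And>z. z \<notin> G \<Longrightarrow> F z = 0"
    and F_bounded: "\<And>z. \<bar>F z\<bar> \<le> 1" and mean_square: "avg G (\<lambda>n. (F n)\<^sup>2) \<le> \<delta>"
    and \<delta>: "\<delta> > 0" and X: "X \<ge> 1"
    and deg: "degree p \<ge> 1" and gauss: "\<forall>i. coeff p i \<in> gauss_ints"
    and card: "\<And>j. j \<le> degree p - 1 \<Longrightarrow> 1 / real (card (gbox X)) \<le> 3 * vdc_bound \<delta> j"
    and large: "vdc_bound \<delta> 0 \<le> \<bar>corr F G D X (degree p - 1) (poly p)\<bar>"
  shows "\<exists>\<alpha> \<beta>. \<alpha> \<in> gauss_ints \<and> \<beta> \<in> gauss_ints \<and> \<alpha> \<noteq> 0 \<and>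
           max (cmod \<alpha>) (cmod \<beta>) \<le> Mp p * (\<Prod>e\<in>{2..degree p}. 2 * 8 ^ e * X ^ e) \<and>
           vdc_bound \<delta> (degree p - 1) \<le> \<bar>corr F G D X 0 (\<lambda>z. \<alpha> * z + \<beta>)\<bar>"
proof -
  have deg_Suc: "Suc (degree p - 1) = degree p"
    using deg by simp
  have "coeff p (Suc (degree p - 1)) \<noteq> 0"
    using deg unfolding deg_Suc by auto
  moreover have "\<forall>i\<le>Suc (degree p - 1). cmod (coeff p i) \<le> Mp p"
    unfolding deg_Suc using norm_coeff_le_Mp by blast
  moreover have "vdc_bound \<delta> 0 \<le> \<bar>corr F G D X (degree p - 1) (poly_coeffs (coeff p) (Suc (degree p - 1)))\<bar>"
    using large unfolding deg_Suc poly_eq_poly_coeffs .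
  ultimately show ?thesis
    using iterated_differencing[where j = 0 and k = "degree p - 1" and c = "coeff p" and B = "Mp p",
        OF G supp F_bounded mean_square \<delta> X] card gauss
    unfolding deg_Suc by auto
qed

section \<open>Balanced functions and the choice of parameters\<close>

lemma balanced_eq_0_outside:
  "A \<subseteq> gbox (real N) \<Longrightarrow> z \<notin> gbox (real N) \<Longrightarrow> balanced A N z = 0"
  unfolding balanced_def by (auto simp: indicator_def)

lemma density_le_1:
  assumes "A \<subseteq> gbox (real N)"
  shows "density A N \<le> 1"
proof -
  have "card A \<le> N\<^sup>2"
    using card_mono[OF finite_gbox assms] by (simp add: card_gbox)
  then show ?thesis
    unfolding density_def by (auto simp: divide_le_eq_1 simp flip: of_nat_power)
qed

lemma abs_balanced_le_1: "A \<subseteq> gbox (real N) \<Longrightarrow> \<bar>balanced A N z\<bar> \<le> 1"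
  using density_le_1[of A N] unfolding balanced_def density_def by (auto simp: indicator_def)

lemma avg_square_balanced:
  assumes A: "A \<subseteq> gbox (real N)" and N: "N \<ge> 1"
  shows "avg (gbox (real N)) (\<lambda>n. (balanced A N n)\<^sup>2) = density A N - (density A N)\<^sup>2"
proof -
  define \<delta> where "\<delta> = density A N"
  define G where "G = gbox (real N)"
  have "(balanced A N n)\<^sup>2 = indicator A n * (1 - 2 * \<delta>) + \<delta>\<^sup>2" if "n \<in> G" for n
    using that A unfolding balanced_def \<delta>_def G_def
    by (auto simp: indicator_def power2_eq_square algebra_simps)
  then have "(\<Sum>n\<in>G. (balanced A N n)\<^sup>2) = (\<Sum>n\<in>G. indicator A n * (1 - 2 * \<delta>) + \<delta>\<^sup>2)"
    by (rule sum.cong[OF refl])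
  also have "\<dots> = real (card A) * (1 - 2 * \<delta>) + real (card G) * \<delta>\<^sup>2"
  proof -
    have "(\<Sum>n\<in>G. indicator A n :: real) = (\<Sum>n\<in>A. 1)"
      using A unfolding G_def by (intro sum.mono_neutral_cong_right) auto
    then show ?thesis
      by (simp add: sum.distrib flip: sum_distrib_right)
  qed
  also have "\<dots> = (real N)\<^sup>2 * (\<delta> - \<delta>\<^sup>2)"
    using N unfolding \<delta>_def density_def G_def card_gbox by (simp add: algebra_simps power2_eq_square)
  finally show ?thesis
    unfolding avg_def G_def \<delta>_def card_gbox using N by simp
qed

lemma le_powr_inverse_if_power_le:
  fixes Y N :: real
  assumes "0 \<le> Y" "k > 0" "Y ^ k \<le> N"
  shows "Y \<le> N powr (1 / real k)"
proof -
  have "Y = (Y ^ k) powr (1 / real k)"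
    using assms by (simp add: powr_powr flip: powr_realpow')
  also have "\<dots> \<le> N powr (1 / real k)"
    using assms by (intro powr_mono2) auto
  finally show ?thesis .
qed

lemma gbox_root_large:
  fixes N m :: nat
  assumes \<delta>: "0 < \<delta>0" "\<delta>0 \<le> \<delta>" "\<delta> \<le> 1" and m: "m \<ge> 1"
    and N: "(2 / vdc_bound \<delta>0 J) ^ (4 * m) \<le> real N"
  defines "X \<equiv> real N powr (1 / (8 * real m))"
  shows "X \<ge> 2" and "j \<le> J \<Longrightarrow> 1 / real (card (gbox X)) \<le> 3 * vdc_bound \<delta> j"
proof -
  define Y where "Y = 2 / vdc_bound \<delta>0 J"
  have "vdc_bound \<delta>0 J \<le> 1 / 2"
    using \<delta> by (intro vdc_bound_le_half) auto
  then have Y: "Y \<ge> 4"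
    unfolding Y_def using vdc_bound_pos[OF \<delta>(1)] by (simp add: field_simps)
  have "1 \<le> Y ^ (4 * m)"
    using Y by (intro one_le_power) auto
  then have N_pos: "0 < real N"
    using N unfolding Y_def by linarith
  have "Y \<le> real N powr (1 / real (4 * m))"
    using Y N m unfolding Y_def[symmetric] by (intro le_powr_inverse_if_power_le) auto
  also have "\<dots> = X\<^sup>2"
    unfolding X_def using m N_pos by (simp add: powr_power)
  finally have X2: "Y \<le> X\<^sup>2" .
  have "(2::real)\<^sup>2 \<le> X\<^sup>2"
    using X2 Y by simp
  then show X: "X \<ge> 2"
    by (rule power2_le_imp_le) (simp add: X_def)
  assume "j \<le> J"
  have "1 / real (card (gbox X)) \<le> 4 / X\<^sup>2"
    by (rule inverse_card_gbox_le[OF X])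
  also have "\<dots> \<le> 4 / Y"
    using X2 Y by (intro divide_left_mono mult_pos_pos; linarith)
  also have "\<dots> = 2 * vdc_bound \<delta>0 J"
    unfolding Y_def using vdc_bound_pos[OF \<delta>(1)] by simp
  also have "\<dots> \<le> 3 * vdc_bound \<delta> j"
    using vdc_bound_mono[OF \<delta> \<open>j \<le> J\<close>] vdc_bound_pos[OF \<delta>(1), of J] by linarith
  finally show "1 / real (card (gbox X)) \<le> 3 * vdc_bound \<delta> j" .
qed

lemma prod_coeff_growth_le:
  fixes X :: real
  assumes X: "X \<ge> 1" and m: "m \<ge> 1"
  shows "(\<Prod>e\<in>{2..m}. 2 * 8 ^ e * X ^ e) \<le> 2 ^ (m * (2 * m + 1)) * X ^ (m\<^sup>2)"
  using m
proof (induction m rule: nat_induct_at_least)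
  case base
  then show ?case
    using X by simp
next
  case (Suc m)
  have "(\<Prod>e\<in>{2..Suc m}. 2 * 8 ^ e * X ^ e)
      = (\<Prod>e\<in>{2..m}. 2 * 8 ^ e * X ^ e) * (2 * 8 ^ Suc m * X ^ Suc m)"
    using Suc.hyps by simp
  also have "\<dots> \<le> (2 ^ (m * (2 * m + 1)) * X ^ (m\<^sup>2)) * (2 * 8 ^ Suc m * X ^ Suc m)"
    using X by (intro mult_right_mono[OF Suc.IH]) simp
  also have "\<dots> = 2 ^ (m * (2 * m + 1) + 1 + 3 * Suc m) * X ^ (m\<^sup>2 + Suc m)"
  proof -
    have "(2::real) ^ m * 8 ^ m = 2 ^ (4 * m)"
      by (simp add: power_mult flip: power_mult_distrib)
    then show ?thesis
      by (simp add: power_add)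
  qed
  also have "\<dots> \<le> 2 ^ (Suc m * (2 * Suc m + 1)) * X ^ ((Suc m)\<^sup>2)"
    using X Suc.hyps by (intro mult_mono power_increasing) (auto simp: algebra_simps power2_eq_square)
  finally show ?case .
qed

lemma powr_root_power_square:
  fixes N :: real and d r :: nat
  assumes "N > 0" "d \<ge> 1" "r \<ge> 2"
  shows "(N powr (1 / (8 * real d ^ r))) ^ (d\<^sup>2) = N powr (1 / (8 * real d ^ (r - 2)))"
proof -
  have "real d ^ r = real d ^ (r - 2) * (real d)\<^sup>2"
    using \<open>r \<ge> 2\<close> by (metis le_add_diff_inverse2 power_add)
  then have "real (d\<^sup>2) * (1 / (8 * real d ^ r)) = 1 / (8 * real d ^ (r - 2))"
    using assms by (simp add: field_simps)
  then show ?thesis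
    using assms by (simp add: powr_power)
qed

lemma prod_coeff_growth_powr_le:
  fixes N M :: real and d r :: nat
  assumes "N \<ge> 1" "d \<ge> 1" "r \<ge> 2" "M \<ge> 0"
  shows "M * (\<Prod>e\<in>{2..d}. 2 * 8 ^ e * (N powr (1 / (8 * real d ^ r))) ^ e)
           \<le> 2 ^ (d * (2 * d + 1)) * M * N powr (1 / (8 * real d ^ (r - 2)))"
proof -
  have "1 \<le> N powr (1 / (8 * real d ^ r))"
    using assms by (intro ge_one_powr_ge_zero) auto
  then have "M * (\<Prod>e\<in>{2..d}. 2 * 8 ^ e * (N powr (1 / (8 * real d ^ r))) ^ e)
      \<le> M * (2 ^ (d * (2 * d + 1)) * (N powr (1 / (8 * real d ^ r))) ^ (d\<^sup>2))"
    using assms by (intro mult_left_mono prod_coeff_growth_le)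
  also have "\<dots> = 2 ^ (d * (2 * d + 1)) * M * N powr (1 / (8 * real d ^ (r - 2)))"
    using assms by (simp add: powr_root_power_square)
  finally show ?thesis .
qed

theorem mainTheorem6:
  fixes d r N N1 :: nat and \<delta>0 :: real and p :: "complex poly"
    and A D :: "complex set"
  assumes d: "d \<ge> 1" and r: "r \<ge> 4"
    and \<delta>0: "0 < \<delta>0" "\<delta>0 < 1"
    and p_coeffs: "\<forall>i. coeff p i \<in> gauss_ints" and p_deg: "degree p = d"
    and N1: "N1 \<ge> 1" and NN1: "N \<ge> N1"
    and A: "A \<subseteq> gbox (real N)" and dens: "density A N \<ge> \<delta>0"
    and D: "D \<noteq> {}" "D \<subseteq> gbox (2 * real N powr (1 / (2 * real d)))"
    and hyp: "\<bar>avg (gbox (real N)) (\<lambda>n. avg D (\<lambda>x.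
                 avg (gbox_pow (real N powr (1 / (8 * real d ^ r))) (d - 1)) (\<lambda>h.
                   balanced A N n * balanced A N (n + poly p (sigma (d - 1) x h)))))\<bar>
              \<ge> density A N ^ 2 / 2"
    and NN0: "real N \<ge> Max {real N1,
                 ((2::real) ^ (3 * 2 ^ (d - 1) - 1) / \<delta>0 ^ (2 ^ (d - 1) + 1)) ^ (4 * d ^ r),
                 ((2::real) ^ (3 * 2 ^ (d - 1)) * real (2 * d + 2) ^ (2 * d + 2)
                    * 2 ^ (2 * d * (d + 1)) * Mp p ^ 2 / \<delta>0 ^ (2 ^ (d - 1) + 1)) ^ 4}"
  shows "\<exists>\<alpha> \<beta>. \<alpha> \<in> gauss_ints \<and> \<beta> \<in> gauss_ints \<and> \<alpha> \<noteq> 0 \<and>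
           max (cmod \<alpha>) (cmod \<beta>) \<le> 2 ^ (d * (2 * d + 1)) * Mp p * real N powr (1 / (8 * real d ^ (r - 2))) \<and>
           \<bar>avg (gbox (real N)) (\<lambda>n. avg D (\<lambda>x.
               balanced A N n * balanced A N (n + \<alpha> * x + \<beta>)))\<bar>
             \<ge> density A N ^ (2 ^ (d - 1) + 1) / 2 ^ (3 * 2 ^ (d - 1) - 2)"
proof -
  define \<delta> where "\<delta> = density A N"
  define X where "X = real N powr (1 / (8 * real d ^ r))"
  have N: "N \<ge> 1"
    using N1 NN1 by simp
  have \<delta>: "0 < \<delta>0" "\<delta>0 \<le> \<delta>" "\<delta> \<le> 1"
    using \<delta>0 dens density_le_1[OF A] unfolding \<delta>_def by auto
  have "(2 / vdc_bound \<delta>0 (d - 1)) ^ (4 * d ^ r) \<le> real N"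
    using NN0 by (simp add: two_div_vdc_bound[OF \<delta>0(1)])
  with gbox_root_large[OF \<delta>, of "d ^ r" "d - 1" N] d
  have X: "X \<ge> 2" and card: "\<And>j. j \<le> d - 1 \<Longrightarrow> 1 / real (card (gbox X)) \<le> 3 * vdc_bound \<delta> j"
    unfolding X_def by auto
  have mean_square: "avg (gbox (real N)) (\<lambda>n. (balanced A N n)\<^sup>2) \<le> \<delta>"
    using avg_square_balanced[OF A N] unfolding \<delta>_def by simp
  have "vdc_bound \<delta> 0 \<le> \<bar>corr (balanced A N) (gbox (real N)) D X (d - 1) (poly p)\<bar>"
    using hyp unfolding corr_def vdc_bound_def \<delta>_def X_def by (simp add: power2_eq_square)
  then obtain \<alpha> \<beta> where \<alpha>\<beta>: "\<alpha> \<in> gauss_ints" "\<beta> \<in> gauss_ints" "\<alpha> \<noteq> 0"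
      and size: "max (cmod \<alpha>) (cmod \<beta>) \<le> Mp p * (\<Prod>e\<in>{2..d}. 2 * 8 ^ e * X ^ e)"
      and large: "vdc_bound \<delta> (d - 1) \<le> \<bar>corr (balanced A N) (gbox (real N)) D X 0 (\<lambda>z. \<alpha> * z + \<beta>)\<bar>"
    using iterated_differencing_poly[where F = "balanced A N" and G = "gbox (real N)"
        and X = X and p = p and D = D,
        OF finite_gbox balanced_eq_0_outside[OF A] abs_balanced_le_1[OF A] mean_square]
      \<delta> X card p_coeffs p_deg d by auto
  note size
  also have "Mp p * (\<Prod>e\<in>{2..d}. 2 * 8 ^ e * X ^ e)
      \<le> 2 ^ (d * (2 * d + 1)) * Mp p * real N powr (1 / (8 * real d ^ (r - 2)))"
    unfolding X_def using N d r Mp_nonneg by (intro prod_coeff_growth_powr_le) auto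
  finally show ?thesis
    using \<alpha>\<beta> large unfolding corr_0 vdc_bound_def \<delta>_def
    by (intro exI[of _ \<alpha>] exI[of _ \<beta>]) (simp add: add.assoc mult_ac)
qed

end
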